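(* The function $\varphi\colon[0,1]\to[0,1]$, $\varphi(t)=\max(t,1/2)$, is $\mathfrak{cm}$-nonexpansive (with respect to the absolute value on $\mathbb{R}$): for all $n\in\mathbb{N}$, $s\in[0,1]$ and sequences $(t_i)_{i=1}^\infty\subset[0,1]$, $$\limsup_{i\to\infty}\sup_{A\subset\{1,\dots,n\}}\Big|\sum_{k\in A}(\varphi(t_{i+k})-\varphi(s))\Big|\le\limsup_{i\to\infty}\sup_{A\subset\{1,\dots,n\}}\Big|\sum_{k\in A}(t_{i+k}-s)\Big|.$$ *)

theory Defs
  imports "HOL-Analysis.Analysis"
begin

definition phi :: "real \<Rightarrow> real" where
  "phi t = max t (1/2)"

end

theory Submission
  imports Defs
begin

text \<open>The map \<open>\<phi>\<close> is nondecreasing and 1-Lipschitz, so each increment \<open>\<phi>(t) - \<phi>(s)\<close> lies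
  between \<open>0\<close> and \<open>t - s\<close>. Given \<open>A\<close>, let \<open>P\<close> and \<open>N\<close> be the indices in \<open>A\<close> with positive and
  negative increment. Then \<open>\<Sum>\<^sub>N (t - s) \<le> \<Sum>\<^sub>A (\<phi>(t) - \<phi>(s)) \<le> \<Sum>\<^sub>P (t - s)\<close>, so the supremum
  over \<open>A\<close> on the left is bounded by the one on the right for every shift \<open>i\<close>; no limit is
  needed, and neither is the restriction to \<open>[0,1]\<close>.\<close>

lemma mono_phi: "mono phi"
  unfolding phi_def by (rule monoI) simp

lemma phi_diff_le: "x \<le> y \<Longrightarrow> phi y - phi x \<le> y - x"
  unfolding phi_def by (simp add: max_def)

lemma increment_between_0_and_diff:
  fixes f :: "real \<Rightarrow> real"
  assumes "mono f" and lip: "\<And>x y. x \<le> y \<Longrightarrow> f y - f x \<le> y - x"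
  shows increment_pos_le_diff: "0 < f x - f s \<Longrightarrow> f x - f s \<le> x - s"
    and increment_neg_ge_diff: "f x - f s < 0 \<Longrightarrow> x - s \<le> f x - f s"
proof -
  show "0 < f x - f s \<Longrightarrow> f x - f s \<le> x - s"
    using lip[of s x] monoD[OF \<open>mono f\<close>, of x s] by linarith
  show "f x - f s < 0 \<Longrightarrow> x - s \<le> f x - f s"
    using lip[of x s] monoD[OF \<open>mono f\<close>, of s x] by linarith
qed

lemma sum_le_sum_on_positive_part:
  fixes a b :: "'a \<Rightarrow> real"
  assumes "finite A" and "\<And>k. 0 < a k \<Longrightarrow> a k \<le> b k"
  shows "sum a A \<le> sum b {k\<in>A. 0 < a k}"
proof -
  let ?P = "{k\<in>A. 0 < a k}"
  have "sum a A = sum a (A - ?P) + sum a ?P"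
    using \<open>finite A\<close> by (intro sum.subset_diff) auto
  also have "sum a (A - ?P) \<le> 0"
    by (rule sum_nonpos) auto
  also have "sum a ?P \<le> sum b ?P"
    using assms(2) by (intro sum_mono) auto
  finally show ?thesis by simp
qed

lemma abs_sum_le_Sup_abs_sums:
  fixes a b :: "'a \<Rightarrow> real"
  assumes "finite S" and "A \<subseteq> S"
    and pos: "\<And>k. 0 < a k \<Longrightarrow> a k \<le> b k"
    and neg: "\<And>k. a k < 0 \<Longrightarrow> b k \<le> a k"
  shows "\<bar>sum a A\<bar> \<le> Sup ((\<lambda>B. \<bar>sum b B\<bar>) ` Pow S)"
proof -
  let ?M = "Sup ((\<lambda>B. \<bar>sum b B\<bar>) ` Pow S)"
  have le_M: "\<bar>sum b B\<bar> \<le> ?M" if "B \<subseteq> S" for B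
    using \<open>finite S\<close> that by (intro le_cSup_finite) auto
  have "finite A" using assms(1,2) finite_subset by blast
  have "sum a A \<le> sum b {k\<in>A. 0 < a k}"
    using \<open>finite A\<close> pos by (rule sum_le_sum_on_positive_part)
  moreover have "- sum a A \<le> - sum b {k\<in>A. 0 < - a k}"
    using sum_le_sum_on_positive_part[of A "\<lambda>k. - a k" "\<lambda>k. - b k"] \<open>finite A\<close> neg
    by (simp add: sum_negf)
  moreover have "\<bar>sum b {k\<in>A. 0 < a k}\<bar> \<le> ?M" "\<bar>sum b {k\<in>A. 0 < - a k}\<bar> \<le> ?M"
    using \<open>A \<subseteq> S\<close> by (auto intro!: le_M)
  ultimately show ?thesis by linarith
qed

lemma Sup_abs_sums_mono:
  fixes a b :: "'a \<Rightarrow> real"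
  assumes "finite S"
    and "\<And>k. 0 < a k \<Longrightarrow> a k \<le> b k"
    and "\<And>k. a k < 0 \<Longrightarrow> b k \<le> a k"
  shows "Sup ((\<lambda>A. \<bar>sum a A\<bar>) ` Pow S) \<le> Sup ((\<lambda>B. \<bar>sum b B\<bar>) ` Pow S)"
  using assms by (intro cSup_least) (auto intro: abs_sum_le_Sup_abs_sums)

theorem proposition6p1:
  fixes n :: nat and s :: real and t :: "nat \<Rightarrow> real"
  assumes "s \<in> {0..1}"
    and "\<And>i. i \<ge> 1 \<Longrightarrow> t i \<in> {0..1}"
  shows "limsup (\<lambda>i. ereal (Sup ((\<lambda>A. \<bar>\<Sum>k\<in>A. phi (t (i + k)) - phi s\<bar>) ` Pow {1..n})))
         \<le> limsup (\<lambda>i. ereal (Sup ((\<lambda>A. \<bar>\<Sum>k\<in>A. t (i + k) - s\<bar>) ` Pow {1..n})))"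
proof (intro Limsup_mono always_eventually allI)
  fix i
  note between = increment_between_0_and_diff[OF mono_phi phi_diff_le]
  have "Sup ((\<lambda>A. \<bar>\<Sum>k\<in>A. phi (t (i + k)) - phi s\<bar>) ` Pow {1..n})
        \<le> Sup ((\<lambda>A. \<bar>\<Sum>k\<in>A. t (i + k) - s\<bar>) ` Pow {1..n})"
    by (rule Sup_abs_sums_mono) (auto intro: between)
  then show "ereal (Sup ((\<lambda>A. \<bar>\<Sum>k\<in>A. phi (t (i + k)) - phi s\<bar>) ` Pow {1..n}))
        \<le> ereal (Sup ((\<lambda>A. \<bar>\<Sum>k\<in>A. t (i + k) - s\<bar>) ` Pow {1..n}))"
    by simp
qed

end
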